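(* Let $X$ be a random variable taking values in a set $\mathcal{X}$, $Y \in [0,1]$ a target outcome and $\hat{Y} \in [0,1]$ an expert prediction, all jointly distributed. Let $\mathcal{F}$ be a class of functions $\mathcal{X} \to [0,1]$, $\alpha \ge 0$, and let $S \subseteq \mathcal{X}$ be $\alpha$-indistinguishable with respect to $\mathcal{F}$ and $Y$. Let $g : [0,1] \to [0,1]$ satisfy, for some $\eta \ge 0$, $$\mathbb{E}_S[(Y - g(\hat{Y}))^2] \le \mathbb{E}_S[(Y - \mathbb{E}_S[Y \mid \hat{Y}])^2] + \eta.$$ Then for every $f \in \mathcal{F}$, $$\mathbb{E}_S[(Y - g(\hat{Y}))^2] + 4\,\mathrm{Cov}_S(Y, \hat{Y})^2 \le \mathbb{E}_S[(Y - f(X))^2] + 2\alpha + \eta.$$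
   Context: For $S \subseteq \mathcal{X}$ with $\mathbb{P}(X \in S) > 0$, $\mathbb{E}_S$, $\mathrm{Cov}_S$ and $\mathbb{E}_S[\cdot \mid \hat{Y}]$ denote expectation, covariance and conditional expectation conditional on $\{X \in S\}$. A set $S$ is $\alpha$-indistinguishable with respect to $\mathcal{F}$ and $Y$ if $|\mathrm{Cov}(f(X), Y \mid X \in S)| \le \alpha$ for all $f \in \mathcal{F}$. *)

theory Defs
  imports "HOL-Probability.Probability"
begin

definition cond_event :: "'a measure \<Rightarrow> ('a \<Rightarrow> 'x) \<Rightarrow> 'x set \<Rightarrow> 'a measure" where
  "cond_event M X S = uniform_measure M {\<omega> \<in> space M. X \<omega> \<in> S}"

definition covariance :: "'a measure \<Rightarrow> ('a \<Rightarrow> real) \<Rightarrow> ('a \<Rightarrow> real) \<Rightarrow> real" where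
  "covariance M U V =
     (\<integral>\<omega>. (U \<omega> - (\<integral>x. U x \<partial>M)) * (V \<omega> - (\<integral>x. V x \<partial>M)) \<partial>M)"

definition alpha_indist ::
  "'a measure \<Rightarrow> ('a \<Rightarrow> 'x) \<Rightarrow> ('x \<Rightarrow> real) set \<Rightarrow> ('a \<Rightarrow> real) \<Rightarrow> 'x set \<Rightarrow> real \<Rightarrow> bool" where
  "alpha_indist M X F Y S \<alpha> \<longleftrightarrow>
     (\<forall>f\<in>F. \<bar>covariance (cond_event M X S) (\<lambda>\<omega>. f (X \<omega>)) Y\<bar> \<le> \<alpha>)"

definition cond_exp_given :: "'a measure \<Rightarrow> ('a \<Rightarrow> real) \<Rightarrow> ('a \<Rightarrow> real) \<Rightarrow> 'a \<Rightarrow> real" where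
  "cond_exp_given M Y Yh = real_cond_exp M (vimage_algebra (space M) Yh borel) Y"

end

theory Submission
  imports Defs
begin

(* Write Z for the conditional expectation of Y given Yh under the conditioned measure.
   Orthogonality of Y - Z gives E[(Y - Z)^2] = Var Y - Var Z, while for any predictor h
   E[(Y - h)^2] >= Var Y - 2 Cov(h, Y) >= Var Y - 2 alpha.  As Yh is measurable w.r.t. the
   conditioning algebra, Cov(Y, Yh) = Cov(Z, Yh); Cauchy-Schwarz and Var Yh <= 1/4 for a
   [0,1]-valued Yh then give 4 Cov(Y, Yh)^2 <= Var Z, which closes the gap.  The hypothesis
   on g transfers the resulting bound from Z to g(Yh) at the cost eta. *)

definition square_integrable :: "'a measure \<Rightarrow> ('a \<Rightarrow> real) \<Rightarrow> bool" where
  "square_integrable M U \<longleftrightarrow> U \<in> borel_measurable M \<and> integrable M (\<lambda>x. (U x)\<^sup>2)"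

lemma (in finite_measure) square_integrable_integrable:
  "square_integrable M U \<Longrightarrow> integrable M U"
  unfolding square_integrable_def by (blast intro: square_integrable_imp_integrable)

lemma (in finite_measure) square_integrable_bounded:
  assumes "U \<in> borel_measurable M" "AE x in M. \<bar>U x\<bar> \<le> B"
  shows "square_integrable M U"
  unfolding square_integrable_def
proof (intro conjI integrable_const_bound[where B = "B\<^sup>2"])
  show "AE x in M. norm ((U x)\<^sup>2) \<le> B\<^sup>2"
    using assms(2)
  proof eventually_elim
    case (elim x)
    then have "\<bar>U x\<bar> \<le> \<bar>B\<bar>"
      by linarith
    then show ?case
      by (simp add: abs_le_square_iff)
  qed
qed (use assms(1) in auto)

lemma (in finite_measure) square_integrable_diff_const:
  assumes "square_integrable M U"
  shows "square_integrable M (\<lambda>x. U x - c)"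
proof -
  have "integrable M U" "integrable M (\<lambda>x. (U x)\<^sup>2)"
    using assms square_integrable_integrable[OF assms] unfolding square_integrable_def by simp_all
  moreover have "(\<lambda>x. (U x - c)\<^sup>2) = (\<lambda>x. (U x)\<^sup>2 - 2 * c * U x + c\<^sup>2)"
    by (simp add: power2_diff algebra_simps)
  ultimately show ?thesis
    using assms unfolding square_integrable_def by auto
qed

lemma square_integrable_mult:
  assumes "square_integrable M U" "square_integrable M V"
  shows "integrable M (\<lambda>x. U x * V x)"
proof (rule Bochner_Integration.integrable_bound)
  show "integrable M (\<lambda>x. (U x)\<^sup>2 + (V x)\<^sup>2)"
    using assms unfolding square_integrable_def by simp
  show "(\<lambda>x. U x * V x) \<in> borel_measurable M"
    using assms unfolding square_integrable_def by auto
  have "\<bar>u * v\<bar> \<le> u\<^sup>2 + v\<^sup>2" for u v :: real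
  proof -
    have "2 * \<bar>u\<bar> * \<bar>v\<bar> \<le> u\<^sup>2 + v\<^sup>2" "0 \<le> \<bar>u\<bar> * \<bar>v\<bar>"
      using sum_squares_bound[of "\<bar>u\<bar>" "\<bar>v\<bar>"] by simp_all
    then show ?thesis
      unfolding abs_mult by linarith
  qed
  then show "AE x in M. norm (U x * V x) \<le> norm ((U x)\<^sup>2 + (V x)\<^sup>2)"
    by simp
qed

lemma (in finite_measure_subalgebra) square_integrable_real_cond_exp:
  assumes "square_integrable M Y"
  shows "square_integrable M (real_cond_exp M F Y)"
  unfolding square_integrable_def
proof
  show meas: "real_cond_exp M F Y \<in> borel_measurable M"
    by (rule measurable_from_subalg[OF subalg]) simp
  have iY: "integrable M Y"
    using assms by (rule square_integrable_integrable)
  have iY2: "integrable M (\<lambda>x. (Y x)\<^sup>2)"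
    using assms unfolding square_integrable_def ..
  have jensen: "AE x in M. (real_cond_exp M F Y x)\<^sup>2 \<le> real_cond_exp M F (\<lambda>x. (Y x)\<^sup>2) x"
    using real_cond_exp_jensens_inequality(2)[OF iY _ _ _ convex_power2] iY2 by auto
  show "integrable M (\<lambda>x. (real_cond_exp M F Y x)\<^sup>2)"
  proof (rule Bochner_Integration.integrable_bound)
    show "integrable M (real_cond_exp M F (\<lambda>x. (Y x)\<^sup>2))"
      using iY2 by (rule real_cond_exp_int)
    show "AE x in M. norm ((real_cond_exp M F Y x)\<^sup>2) \<le> norm (real_cond_exp M F (\<lambda>x. (Y x)\<^sup>2) x)"
      using jensen by eventually_elim simp
  qed (use meas in simp)
qed

lemma covariance_commute: "covariance M U V = covariance M V U"
  unfolding covariance_def by (simp add: mult.commute)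

lemma covariance_self_nonneg: "0 \<le> covariance M U U"
  unfolding covariance_def by (rule integral_nonneg_AE) simp

lemma (in prob_space) covariance_eq:
  assumes "square_integrable M U" "square_integrable M V"
  shows "covariance M U V = expectation (\<lambda>x. U x * V x) - expectation U * expectation V"
proof -
  have "integrable M U" "integrable M V" "integrable M (\<lambda>x. U x * V x)"
    using assms by (auto intro: square_integrable_integrable square_integrable_mult)
  moreover have "(\<lambda>x. (U x - expectation U) * (V x - expectation V)) =
      (\<lambda>x. U x * V x - expectation V * U x - expectation U * V x + expectation U * expectation V)"
    by (simp add: algebra_simps)
  ultimately show ?thesis
    unfolding covariance_def by (simp add: prob_space)
qed

lemma quadratic_nonneg_imp_square_le:
  fixes a b c :: real
  assumes "0 \<le> b" and nonneg: "\<And>t. 0 \<le> a - 2 * t * c + t\<^sup>2 * b"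
  shows "c\<^sup>2 \<le> a * b"
proof (cases "b = 0")
  case True
  have "c = 0"
  proof (rule ccontr)
    assume "c \<noteq> 0"
    then show False
      using nonneg[of "(a + 1) / (2 * c)"] True by (simp add: field_simps)
  qed
  then show ?thesis
    using True by simp
next
  case False
  with assms(1) have "0 < b"
    by simp
  have "0 \<le> a - 2 * (c / b) * c + (c / b)\<^sup>2 * b"
    by (rule nonneg)
  then have "0 \<le> (a * b - c\<^sup>2) / b"
    using \<open>0 < b\<close> by (simp add: field_simps power2_eq_square)
  then show ?thesis
    using \<open>0 < b\<close> by (simp add: zero_le_divide_iff)
qed

lemma (in prob_space) covariance_square_le:
  assumes "square_integrable M U" "square_integrable M V"
  shows "(covariance M U V)\<^sup>2 \<le> covariance M U U * covariance M V V"
proof (rule quadratic_nonneg_imp_square_le[OF covariance_self_nonneg])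
  fix t
  define U' where "U' x = U x - expectation U" for x
  define V' where "V' x = V x - expectation V" for x
  have U': "square_integrable M U'" and V': "square_integrable M V'"
    unfolding U'_def V'_def using assms by (auto intro: square_integrable_diff_const)
  have "(\<lambda>x. (U' x - t * V' x)\<^sup>2) = (\<lambda>x. U' x * U' x - 2 * t * (U' x * V' x) + t\<^sup>2 * (V' x * V' x))"
    by (simp add: power2_eq_square algebra_simps)
  then have "expectation (\<lambda>x. (U' x - t * V' x)\<^sup>2) =
      expectation (\<lambda>x. U' x * U' x) - 2 * t * expectation (\<lambda>x. U' x * V' x) + t\<^sup>2 * expectation (\<lambda>x. V' x * V' x)"
    using U' V' by (simp add: square_integrable_mult)
  moreover have "0 \<le> expectation (\<lambda>x. (U' x - t * V' x)\<^sup>2)"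
    by (rule integral_nonneg_AE) simp
  ultimately show "0 \<le> covariance M U U - 2 * t * covariance M U V + t\<^sup>2 * covariance M V V"
    unfolding covariance_def U'_def V'_def by simp
qed

lemma (in prob_space) covariance_self_le_quarter:
  assumes "U \<in> borel_measurable M" "AE x in M. U x \<in> {0..1}"
  shows "covariance M U U \<le> 1 / 4"
proof -
  have U: "square_integrable M U"
    using assms by (intro square_integrable_bounded[where B = 1]) auto
  then have "integrable M U"
    by (rule square_integrable_integrable)
  have "expectation (\<lambda>x. U x * U x) \<le> expectation U"
    using assms(2) by (intro integral_mono_AE square_integrable_mult U \<open>integrable M U\<close>)
      (auto simp: mult_left_le_one_le)
  moreover have "0 \<le> (expectation U - 1 / 2)\<^sup>2"
    by simp
  ultimately show ?thesis
    using covariance_eq[OF U U] by (simp add: power2_eq_square algebra_simps)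
qed

lemma (in prob_space) expectation_square_diff_eq:
  assumes "square_integrable M Y" "square_integrable M h"
  shows "expectation (\<lambda>x. (Y x - h x)\<^sup>2) =
    covariance M Y Y + covariance M h h - 2 * covariance M h Y + (expectation Y - expectation h)\<^sup>2"
proof -
  have "(\<lambda>x. (Y x - h x)\<^sup>2) = (\<lambda>x. Y x * Y x + h x * h x - 2 * (h x * Y x))"
    by (simp add: power2_eq_square algebra_simps)
  then have "expectation (\<lambda>x. (Y x - h x)\<^sup>2) =
      expectation (\<lambda>x. Y x * Y x) + expectation (\<lambda>x. h x * h x) - 2 * expectation (\<lambda>x. h x * Y x)"
    using assms by (simp add: square_integrable_mult)
  then show ?thesis
    using assms by (simp add: covariance_eq power2_eq_square algebra_simps)
qed

locale prob_space_subalgebra = prob_space M + finite_measure_subalgebra M F for M F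

context prob_space_subalgebra
begin

lemma covariance_real_cond_exp:
  assumes Y: "square_integrable M Y" and V: "square_integrable M V"
    and [measurable]: "V \<in> borel_measurable F"
  shows "covariance M (real_cond_exp M F Y) V = covariance M Y V"
proof -
  have [measurable]: "Y \<in> borel_measurable M"
    using Y unfolding square_integrable_def by simp
  have "integrable M (\<lambda>x. V x * Y x)"
    using V Y by (rule square_integrable_mult)
  then have "expectation (\<lambda>x. V x * real_cond_exp M F Y x) = expectation (\<lambda>x. V x * Y x)"
    by (rule real_cond_exp_intg(2)) simp_all
  moreover have "expectation (real_cond_exp M F Y) = expectation Y"
    using Y by (intro real_cond_exp_int(2) square_integrable_integrable)
  ultimately show ?thesis
    using Y V square_integrable_real_cond_exp[OF Y] by (simp add: covariance_eq mult.commute)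
qed

lemma expectation_square_diff_real_cond_exp:
  assumes Y: "square_integrable M Y"
  shows "expectation (\<lambda>x. (Y x - real_cond_exp M F Y x)\<^sup>2) =
    covariance M Y Y - covariance M (real_cond_exp M F Y) (real_cond_exp M F Y)"
proof -
  let ?Z = "real_cond_exp M F Y"
  have Z: "square_integrable M ?Z"
    using Y by (rule square_integrable_real_cond_exp)
  have "covariance M ?Z Y = covariance M ?Z ?Z"
    using covariance_real_cond_exp[OF Y Z] by (simp add: covariance_commute)
  moreover have "expectation ?Z = expectation Y"
    using Y by (intro real_cond_exp_int(2) square_integrable_integrable)
  ultimately show ?thesis
    using expectation_square_diff_eq[OF Y Z] by simp
qed

lemma expectation_square_diff_real_cond_exp_le:
  assumes Y: "square_integrable M Y" and h: "square_integrable M h"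
    and [measurable]: "Yh \<in> borel_measurable F" and Yh_unit: "AE x in M. Yh x \<in> {0..1}"
  shows "expectation (\<lambda>x. (Y x - real_cond_exp M F Y x)\<^sup>2) + 4 * (covariance M Y Yh)\<^sup>2
    \<le> expectation (\<lambda>x. (Y x - h x)\<^sup>2) + 2 * covariance M h Y"
proof -
  let ?Z = "real_cond_exp M F Y"
  have Z: "square_integrable M ?Z"
    using Y by (rule square_integrable_real_cond_exp)
  have Yh_M: "Yh \<in> borel_measurable M"
    by (rule measurable_from_subalg[OF subalg]) simp
  have Yh: "square_integrable M Yh"
    using Yh_M Yh_unit by (intro square_integrable_bounded[where B = 1]) auto
  have "(covariance M Y Yh)\<^sup>2 = (covariance M ?Z Yh)\<^sup>2"
    using covariance_real_cond_exp[OF Y Yh] by simp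
  also have "\<dots> \<le> covariance M ?Z ?Z * covariance M Yh Yh"
    using Z Yh by (rule covariance_square_le)
  also have "\<dots> \<le> covariance M ?Z ?Z * (1 / 4)"
    using covariance_self_le_quarter[OF Yh_M Yh_unit] covariance_self_nonneg
    by (rule mult_left_mono)
  finally have "4 * (covariance M Y Yh)\<^sup>2 \<le> covariance M ?Z ?Z"
    by simp
  moreover have "covariance M Y Y - 2 * covariance M h Y \<le> expectation (\<lambda>x. (Y x - h x)\<^sup>2)"
    using expectation_square_diff_eq[OF Y h] covariance_self_nonneg[of M h] by simp
  ultimately show ?thesis
    using expectation_square_diff_real_cond_exp[OF Y] by simp
qed

end

lemma subalgebra_vimage_algebra:
  "f \<in> measurable M N \<Longrightarrow> subalgebra M (vimage_algebra (space M) f N)"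
  by (simp add: subalgebra_def measurable_iff_sets)

lemma space_cond_event [simp]: "space (cond_event M X S) = space M"
  by (simp add: cond_event_def)

lemma sets_cond_event [measurable_cong]: "sets (cond_event M X S) = sets M"
  by (simp add: cond_event_def)

lemma prob_space_cond_event:
  assumes "prob_space M" and "0 < measure M {\<omega> \<in> space M. X \<omega> \<in> S}"
  shows "prob_space (cond_event M X S)"
  unfolding cond_event_def
proof (rule prob_space_uniform_measure)
  interpret prob_space M by fact
  show "emeasure M {\<omega> \<in> space M. X \<omega> \<in> S} \<noteq> 0"
    using assms(2) by (auto simp: measure_def)
  show "emeasure M {\<omega> \<in> space M. X \<omega> \<in> S} \<noteq> \<infinity>"
    by simp
qed

theorem corollary2:
  fixes M :: "'a measure" and N :: "'x measure"
    and X :: "'a \<Rightarrow> 'x" and Y Yh :: "'a \<Rightarrow> real"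
    and F :: "('x \<Rightarrow> real) set" and S :: "'x set"
    and g :: "real \<Rightarrow> real" and \<alpha> \<eta> :: real
  assumes "prob_space M"
    and "X \<in> measurable M N"
    and "Y \<in> borel_measurable M" and "Yh \<in> borel_measurable M"
    and "\<And>\<omega>. \<omega> \<in> space M \<Longrightarrow> Y \<omega> \<in> {0..1}"
    and "\<And>\<omega>. \<omega> \<in> space M \<Longrightarrow> Yh \<omega> \<in> {0..1}"
    and "\<And>f. f \<in> F \<Longrightarrow> f \<in> borel_measurable N"
    and "\<And>f x. f \<in> F \<Longrightarrow> x \<in> space N \<Longrightarrow> f x \<in> {0..1}"
    and "\<alpha> \<ge> 0"
    and "S \<in> sets N"
    and "measure M {\<omega> \<in> space M. X \<omega> \<in> S} > 0"
    and "alpha_indist M X F Y S \<alpha>"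
    and "g \<in> borel_measurable borel"
    and "\<And>t. t \<in> {0..1} \<Longrightarrow> g t \<in> {0..1}"
    and "\<eta> \<ge> 0"
    and "(\<integral>\<omega>. (Y \<omega> - g (Yh \<omega>))\<^sup>2 \<partial>cond_event M X S)
         \<le> (\<integral>\<omega>. (Y \<omega> - cond_exp_given (cond_event M X S) Y Yh \<omega>)\<^sup>2 \<partial>cond_event M X S) + \<eta>"
    and "f \<in> F"
  shows "(\<integral>\<omega>. (Y \<omega> - g (Yh \<omega>))\<^sup>2 \<partial>cond_event M X S)
           + 4 * (covariance (cond_event M X S) Y Yh)\<^sup>2
         \<le> (\<integral>\<omega>. (Y \<omega> - f (X \<omega>))\<^sup>2 \<partial>cond_event M X S) + 2 * \<alpha> + \<eta>"
proof -
  define P where "P = cond_event M X S"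
  define G where "G = vimage_algebra (space P) Yh borel"
  have Yh_P: "Yh \<in> borel_measurable P"
    unfolding P_def using assms(4) by measurable
  have "prob_space P"
    unfolding P_def using assms(1,11) by (rule prob_space_cond_event)
  moreover have "subalgebra P G"
    unfolding G_def using Yh_P by (rule subalgebra_vimage_algebra)
  ultimately interpret prob_space_subalgebra P G
    by (intro prob_space_subalgebra.intro finite_measure_subalgebra.intro
        finite_measure_subalgebra_axioms.intro) (auto simp: prob_space_def)
  have unit_square_integrable: "square_integrable P U"
    if "U \<in> borel_measurable M" "\<And>\<omega>. \<omega> \<in> space M \<Longrightarrow> U \<omega> \<in> {0..1}" for U
    using that by (intro square_integrable_bounded[where B = 1]) (auto simp: P_def)
  have "(\<lambda>\<omega>. f (X \<omega>)) \<in> borel_measurable M"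
    using assms(2,7,17) by measurable
  moreover have "f (X \<omega>) \<in> {0..1}" if "\<omega> \<in> space M" for \<omega>
    using assms(8,17) measurable_space[OF assms(2) that] .
  ultimately have "expectation (\<lambda>\<omega>. (Y \<omega> - real_cond_exp P G Y \<omega>)\<^sup>2) + 4 * (covariance P Y Yh)\<^sup>2
      \<le> expectation (\<lambda>\<omega>. (Y \<omega> - f (X \<omega>))\<^sup>2) + 2 * covariance P (\<lambda>\<omega>. f (X \<omega>)) Y"
    using assms(3,5,6) Yh_P
    by (intro expectation_square_diff_real_cond_exp_le unit_square_integrable)
      (auto simp: G_def P_def intro: measurable_vimage_algebra1)
  moreover have "covariance P (\<lambda>\<omega>. f (X \<omega>)) Y \<le> \<alpha>"
    using assms(12,17) unfolding alpha_indist_def P_def by fastforce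
  moreover have "expectation (\<lambda>\<omega>. (Y \<omega> - g (Yh \<omega>))\<^sup>2)
      \<le> expectation (\<lambda>\<omega>. (Y \<omega> - real_cond_exp P G Y \<omega>)\<^sup>2) + \<eta>"
    using assms(16) unfolding P_def[symmetric] G_def cond_exp_given_def .
  ultimately show ?thesis
    unfolding P_def[symmetric] by linarith
qed

end
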